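(* Let $k$ be a field, $H=\langle a_1,\dots,a_\ell\rangle$ a numerical semigroup with $\gcd(a_1,\dots,a_\ell)=1$, $R=k[[H]]\subseteq k[[t]]$ with maximal ideal $\mathfrak m$, $f=\mathrm f(H)$ the Frobenius number, $\mathrm{PF}(H)=\{c_1<c_2<\dots<c_r\}$ the pseudo-Frobenius numbers (so $c_r=f$ and $r=\mathrm r(R)$), $K=\sum_{i=1}^rRt^{f-c_i}$ and $\mathfrak c=R:R[K]$. Suppose that $R$ is a $2$-AGL ring. Then the following are equivalent: (1) $K/R\cong(R/\mathfrak c)^{\oplus(r-1)}$ as an $R$-module; (2) there is an integer $1\le j\le\ell$ such that $f+a_j=c_i+c_{r-i}$ for every $1\le i\le r-1$.
   Context: $\mathrm f(H)=\max(\mathbb Z\setminus H)$; $\mathrm{PF}(H)=\{n\in\mathbb Z\setminus H: n+a_i\in H\ \forall i\}$. $K$ is a canonical fractional ideal of $R$. $R$ is $2$-AGL if it has a canonical ideal $I$ (proper ideal $\cong\mathrm K_R$) containing a parameter ideal as a reduction with $\mathrm e_1(I)=\mathrm e_0(I)-\ell_R(R/I)+2$; equivalently $\ell_R(R[K]/K)=2$. *)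

theory Defs
  imports "HOL-Computational_Algebra.Formal_Power_Series"
begin

definition semigroup_gen :: "(nat \<Rightarrow> nat) \<Rightarrow> nat \<Rightarrow> nat set" where
  "semigroup_gen a l = {n. \<exists>x::nat \<Rightarrow> nat. n = (\<Sum>i\<in>{1..l}. x i * a i)}"

definition frobenius :: "nat set \<Rightarrow> int" where
  "frobenius H = (GREATEST z::int. z \<notin> int ` H)"

definition pseudo_frobenius :: "nat set \<Rightarrow> (nat \<Rightarrow> nat) \<Rightarrow> nat \<Rightarrow> int set" where
  "pseudo_frobenius H a l = {z::int. z \<notin> int ` H \<and> (\<forall>i\<in>{1..l}. z + int (a i) \<in> int ` H)}"

definition semigroup_ring :: "nat set \<Rightarrow> 'a::field fps set" where
  "semigroup_ring H = {p. \<forall>n. fps_nth p n \<noteq> 0 \<longrightarrow> n \<in> H}"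

definition monomial_module :: "'a::field fps set \<Rightarrow> (nat \<Rightarrow> nat) \<Rightarrow> nat \<Rightarrow> 'a fps set" where
  "monomial_module R e r = {(\<Sum>i\<in>{1..r}. g i * fps_X ^ e i) | g. \<forall>i\<in>{1..r}. g i \<in> R}"

definition ring_adjoin :: "'b::comm_ring_1 set \<Rightarrow> 'b set \<Rightarrow> 'b set" where
  "ring_adjoin R K = \<Inter>{S. R \<union> K \<subseteq> S \<and> (\<forall>x\<in>S. \<forall>y\<in>S. x + y \<in> S \<and> x * y \<in> S \<and> - x \<in> S)}"

definition colon :: "'b::comm_ring_1 set \<Rightarrow> 'b set \<Rightarrow> 'b set" where
  "colon R M = {x. \<forall>y\<in>M. x * y \<in> R}"

definition is_submod :: "'b::comm_ring_1 set \<Rightarrow> 'b set \<Rightarrow> bool" where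
  "is_submod R L \<longleftrightarrow> 0 \<in> L \<and> (\<forall>x\<in>L. \<forall>y\<in>L. x + y \<in> L) \<and> (\<forall>c\<in>R. \<forall>x\<in>L. c * x \<in> L)"

definition length_ge :: "'b::comm_ring_1 set \<Rightarrow> 'b set \<Rightarrow> 'b set \<Rightarrow> nat \<Rightarrow> bool" where
  "length_ge R N M n \<longleftrightarrow> (\<exists>L :: nat \<Rightarrow> 'b set. L 0 = N \<and> L n = M \<and>
      (\<forall>i\<le>n. is_submod R (L i)) \<and> (\<forall>i<n. L i \<subset> L (Suc i)))"

definition module_length_eq :: "'b::comm_ring_1 set \<Rightarrow> 'b set \<Rightarrow> 'b set \<Rightarrow> nat \<Rightarrow> bool" where
  "module_length_eq R N M n \<longleftrightarrow> length_ge R N M n \<and> \<not> length_ge R N M (Suc n)"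

text \<open>M/N is isomorphic to (R/I)^n as R-modules: there is an R-linear bijection
  M/N -> (R/I)^n, given here through a choice of representatives phi x i in R.\<close>
definition quot_iso_free :: "'b::comm_ring_1 set \<Rightarrow> 'b set \<Rightarrow> 'b set \<Rightarrow> 'b set \<Rightarrow> nat \<Rightarrow> bool" where
  "quot_iso_free R M N I n \<longleftrightarrow> (\<exists>\<phi> :: 'b \<Rightarrow> nat \<Rightarrow> 'b.
      (\<forall>x\<in>M. \<forall>i<n. \<phi> x i \<in> R) \<and>
      (\<forall>x\<in>M. \<forall>y\<in>M. \<forall>i<n. \<phi> (x + y) i - \<phi> x i - \<phi> y i \<in> I) \<and>
      (\<forall>c\<in>R. \<forall>x\<in>M. \<forall>i<n. \<phi> (c * x) i - c * \<phi> x i \<in> I) \<and>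
      (\<forall>x\<in>M. (\<forall>i<n. \<phi> x i \<in> I) \<longleftrightarrow> x \<in> N) \<and>
      (\<forall>y. (\<forall>i<n. y i \<in> R) \<longrightarrow> (\<exists>x\<in>M. \<forall>i<n. \<phi> x i - y i \<in> I)))"

end

(*
  Everything is monomial: R = k[[H]], K and R[K] consist of the series supported on
  E = \<Union>\<^sub>k (e k + H) with e k = f - c k, resp. on the additive closure S of E, and
  lengths of quotients count exponents.  Since R is 2-AGL, S - E = {f - s, f} for some
  s \<in> H, which is a minimal generator a j, and the conductor consists of the series in R
  with no terms of degree 0 and s, so R/c has basis 1, t^s.  Both conditions of the theorem
  are equivalent to "e k + s \<notin> H for all k < r".  For (2): the gaps in E are exactly the
  e k and e k + s, so each c i has a partner with c i + c m = f + s, and the partner map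
  reverses the order of c 1 < ... < c (r-1).  For (1): the coefficients at e k and e k + s
  give the isomorphism; conversely, if t^(e k + s) \<in> R, the class of t^(e k) in K/R is killed
  by t^s without being a multiple of t^s, which is impossible in (R/c)^(r-1).
*)

theory Submission
  imports Defs
begin

unbundle fps_syntax

lemma decreasing_self_map_eq_reverse:
  fixes \<sigma> :: "nat \<Rightarrow> nat"
  assumes into: "\<And>k. k \<in> {1..n} \<Longrightarrow> \<sigma> k \<in> {1..n}"
    and decreasing: "\<And>k k'. k \<in> {1..n} \<Longrightarrow> k' \<in> {1..n} \<Longrightarrow> k < k' \<Longrightarrow> \<sigma> k' < \<sigma> k"
    and k: "k \<in> {1..n}"
  shows "\<sigma> k = n + 1 - k"
proof -
  have upper: "\<sigma> k \<le> n + 1 - k" if "k \<in> {1..n}" for k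
    using that
  proof (induction k)
    case (Suc k)
    then show ?case
      using into[of 1] decreasing[of k "Suc k"] by (cases "k = 0") force+
  qed simp
  have lower: "j + 1 \<le> \<sigma> (n - j)" if "j < n" for j
    using that
  proof (induction j)
    case (Suc j)
    have "\<sigma> (n - j) < \<sigma> (n - Suc j)"
      using decreasing[of "n - Suc j" "n - j"] Suc.prems by simp
    then show ?case
      using Suc by simp
  qed (use into[of n] in simp)
  show ?thesis
    using upper[OF k] lower[of "n - k"] k by simp
qed

lemma sum_eq_single:
  "finite A \<Longrightarrow> x \<in> A \<Longrightarrow> (\<And>i. i \<in> A \<Longrightarrow> i \<noteq> x \<Longrightarrow> t i = 0) \<Longrightarrow> sum t A = t x"
  by (simp add: sum.remove sum.neutral)

lemma sum_eq_two:
  assumes "finite A" "x \<in> A" "y \<in> A" "x \<noteq> y" "\<And>i. i \<in> A \<Longrightarrow> i \<noteq> x \<Longrightarrow> i \<noteq> y \<Longrightarrow> t i = 0"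
  shows "sum t A = t x + t y"
proof -
  have "sum t A = t x + sum t (A - {x})"
    using assms(1,2) by (simp add: sum.remove)
  also have "sum t (A - {x}) = t y"
    using assms by (intro sum_eq_single) auto
  finally show ?thesis .
qed

lemma three_increasing_elements:
  fixes D :: "'a::linorder set"
  assumes "finite D" "3 \<le> card D"
  obtains u v w where "u \<in> D" "v \<in> D" "w \<in> D" "u < v" "v < w"
proof -
  define xs where "xs = sorted_list_of_set D"
  have xs: "sorted_wrt (<) xs" "set xs = D" "length xs = card D"
    using assms(1) by (simp_all add: xs_def)
  show ?thesis
    using that[of "xs ! 0" "xs ! 1" "xs ! 2"] sorted_wrt_nth_less[OF xs(1)] nth_mem[of _ xs] xs(2,3) assms(2)
    by auto
qed

section \<open>Numerical semigroups\<close>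

lemma semigroup_genI: "n = (\<Sum>i\<in>{1..l}. x i * a i) \<Longrightarrow> n \<in> semigroup_gen a l"
  unfolding semigroup_gen_def by blast

lemma zero_in_semigroup_gen: "0 \<in> semigroup_gen a l"
  unfolding semigroup_gen_def by (rule CollectI, rule exI[of _ "\<lambda>_. 0"]) simp

lemma add_in_semigroup_gen:
  assumes "x \<in> semigroup_gen a l" "y \<in> semigroup_gen a l"
  shows "x + y \<in> semigroup_gen a l"
proof -
  obtain u v where u: "x = (\<Sum>i\<in>{1..l}. u i * a i)" and v: "y = (\<Sum>i\<in>{1..l}. v i * a i)"
    using assms unfolding semigroup_gen_def by blast
  have "x + y = (\<Sum>i\<in>{1..l}. (u i + v i) * a i)"
    by (simp add: u v sum.distrib distrib_right)
  then show ?thesis by (rule semigroup_genI)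
qed

lemma mult_in_semigroup_gen: "x \<in> semigroup_gen a l \<Longrightarrow> m * x \<in> semigroup_gen a l"
  by (induction m) (auto simp: zero_in_semigroup_gen add_in_semigroup_gen)

lemma generator_in_semigroup_gen:
  assumes "i \<in> {1..l}"
  shows "a i \<in> semigroup_gen a l"
proof (rule semigroup_genI)
  have "(\<Sum>k\<in>{1..l}. of_bool (k = i) * a k) = (\<Sum>k\<in>{1..l}. if k = i then a k else 0)"
    by (rule sum.cong) auto
  then show "a i = (\<Sum>k\<in>{1..l}. of_bool (k = i) * a k)"
    using assms by simp
qed

lemma semigroup_gen_minus_generator:
  assumes "h \<in> semigroup_gen a l" "h \<noteq> 0"
  shows "\<exists>j\<in>{1..l}. a j \<le> h \<and> h - a j \<in> semigroup_gen a l"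
proof -
  obtain u where u: "h = (\<Sum>i\<in>{1..l}. u i * a i)"
    using assms unfolding semigroup_gen_def by blast
  then obtain j where j: "j \<in> {1..l}" "u j * a j \<noteq> 0"
    using assms(2) by (metis (no_types, lifting) sum.neutral)
  define v where "v = u(j := u j - 1)"
  have h: "h = u j * a j + (\<Sum>i\<in>{1..l} - {j}. u i * a i)"
    unfolding u by (rule sum.remove) (use j in auto)
  have "(\<Sum>i\<in>{1..l}. v i * a i) = v j * a j + (\<Sum>i\<in>{1..l} - {j}. v i * a i)"
    by (rule sum.remove) (use j in auto)
  also have "(\<Sum>i\<in>{1..l} - {j}. v i * a i) = (\<Sum>i\<in>{1..l} - {j}. u i * a i)"
    by (rule sum.cong) (auto simp: v_def)
  finally have v: "(\<Sum>i\<in>{1..l}. v i * a i) = v j * a j + (\<Sum>i\<in>{1..l} - {j}. u i * a i)" .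
  have "u j * a j = a j + v j * a j"
    using j(2) by (cases "u j") (auto simp: v_def)
  then have "a j \<le> h" "h - a j = (\<Sum>i\<in>{1..l}. v i * a i)"
    using h v by simp_all
  then show ?thesis
    using j(1) semigroup_genI by blast
qed

lemma Gcd_image_eq_int_combination:
  "\<exists>u::nat \<Rightarrow> int. int (Gcd (a ` {1..l})) = (\<Sum>i\<in>{1..l}. u i * int (a i))"
proof (induction l)
  case 0
  then show ?case by simp
next
  case (Suc l)
  then obtain u where u: "int (Gcd (a ` {1..l})) = (\<Sum>i\<in>{1..l}. u i * int (a i))"
    by blast
  obtain p q where pq: "p * int (a (Suc l)) + q * int (Gcd (a ` {1..l}))
      = gcd (int (a (Suc l))) (int (Gcd (a ` {1..l})))"
    using bezout_int by blast
  define w where "w = (\<lambda>i. if i = Suc l then p else q * u i)"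
  have split: "{1..Suc l} = insert (Suc l) {1..l}" by auto
  have "(\<Sum>i\<in>{1..Suc l}. w i * int (a i))
      = p * int (a (Suc l)) + q * (\<Sum>i\<in>{1..l}. u i * int (a i))"
    unfolding split by (simp add: w_def sum_distrib_left mult.assoc)
  also have "\<dots> = int (Gcd (a ` {1..Suc l}))"
    unfolding split image_insert Gcd_insert gcd_int_int_eq[symmetric] pq[symmetric] u[symmetric] ..
  finally show ?case by metis
qed

lemma semigroup_gen_cofinite:
  assumes "Gcd (a ` {1..l}) = 1"
  shows "\<exists>N. \<forall>n\<ge>N. n \<in> semigroup_gen a l"
proof -
  obtain u where u: "1 = (\<Sum>i\<in>{1..l}. u i * int (a i))"
    using Gcd_image_eq_int_combination[of a l] assms by auto
  define p where "p = (\<Sum>i\<in>{1..l}. nat (u i) * a i)"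
  define q where "q = (\<Sum>i\<in>{1..l}. nat (- u i) * a i)"
  have pH: "p \<in> semigroup_gen a l" and qH: "q \<in> semigroup_gen a l"
    unfolding p_def q_def by (auto intro: semigroup_genI)
  have "int p - int q = (\<Sum>i\<in>{1..l}. (int (nat (u i)) - int (nat (- u i))) * int (a i))"
    by (simp add: p_def q_def sum_subtractf left_diff_distrib)
  also have "\<dots> = (\<Sum>i\<in>{1..l}. u i * int (a i))"
    by (rule sum.cong) auto
  finally have pq: "p = q + 1"
    using u by simp
  \<comment> \<open>As \<open>p = q + 1\<close>, every \<open>n \<ge> q\<^sup>2\<close> is \<open>Q q + \<rho> = (Q - \<rho>) q + \<rho> p\<close> with \<open>\<rho> < q \<le> Q\<close>.\<close>
  have "n \<in> semigroup_gen a l" if n: "q * q \<le> n" for n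
  proof (cases "q = 0")
    case True
    then show ?thesis
      using pq mult_in_semigroup_gen[OF pH, of n] by simp
  next
    case False
    define Q where "Q = n div q"
    define \<rho> where "\<rho> = n mod q"
    have "\<rho> < q" using False by (simp add: \<rho>_def)
    moreover have "q \<le> Q"
      using n False unfolding Q_def by (metis div_le_mono nonzero_mult_div_cancel_right)
    ultimately obtain t where t: "Q = t + \<rho>"
      by (metis le_add_diff_inverse2 less_imp_le order.trans)
    have "n = Q * q + \<rho>"
      by (simp add: Q_def \<rho>_def)
    also have "\<dots> = t * q + \<rho> * p"
      by (simp add: t pq algebra_simps)
    finally show ?thesis
      using add_in_semigroup_gen[OF mult_in_semigroup_gen[OF qH] mult_in_semigroup_gen[OF pH]]
      by simp
  qed
  then show ?thesis by blast
qed

lemma frobenius_greatest: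
  assumes cofinite: "\<And>n. N \<le> n \<Longrightarrow> n \<in> H"
  shows "frobenius H \<notin> int ` H" and "z \<notin> int ` H \<Longrightarrow> z \<le> frobenius H"
proof -
  define M where "M = {z \<in> {-1..int N}. z \<notin> int ` H}"
  have fin: "finite M"
    unfolding M_def by (rule finite_subset[of _ "{-1..int N}"]) auto
  have m1: "-1 \<in> M"
    by (auto simp: M_def)
  have ub: "z \<le> Max M" if "z \<notin> int ` H" for z
  proof (cases "z < -1")
    case False
    have "z < int N"
    proof (rule ccontr)
      assume "\<not> z < int N"
      then have "N \<le> nat z" "z = int (nat z)"
        by auto
      then show False
        using that cofinite by (metis image_eqI)
    qed
    then have "z \<in> M"
      using False that by (auto simp: M_def)
    then show ?thesis
      using Max_ge[OF fin] by blast
  qed (use Max_ge[OF fin m1] in simp)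
  have "Max M \<in> M"
    using Max_in[OF fin] m1 by blast
  then have "Max M \<notin> int ` H"
    by (simp add: M_def)
  moreover have "frobenius H = Max M"
    unfolding frobenius_def by (rule Greatest_equality) (use calculation ub in auto)
  ultimately show "frobenius H \<notin> int ` H" and "z \<notin> int ` H \<Longrightarrow> z \<le> frobenius H"
    using ub by auto
qed

section \<open>Power series supported on a set of exponents\<close>

definition fps_supported :: "nat set \<Rightarrow> 'a::comm_ring_1 fps set" where
  "fps_supported A = {p. \<forall>n. p $ n \<noteq> 0 \<longrightarrow> n \<in> A}"

lemma fps_supported_iff: "p \<in> fps_supported A \<longleftrightarrow> (\<forall>n. p $ n \<noteq> 0 \<longrightarrow> n \<in> A)"
  by (simp add: fps_supported_def)

lemma fps_supported_nth: "p \<in> fps_supported A \<Longrightarrow> n \<notin> A \<Longrightarrow> p $ n = 0"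
  by (auto simp: fps_supported_def)

lemma semigroup_ring_eq_fps_supported: "semigroup_ring H = fps_supported H"
  by (simp add: semigroup_ring_def fps_supported_def)

lemma zero_in_fps_supported [simp]: "0 \<in> fps_supported A"
  by (simp add: fps_supported_def)

lemma fps_supported_add: "p \<in> fps_supported A \<Longrightarrow> q \<in> fps_supported A \<Longrightarrow> p + q \<in> fps_supported A"
  by (auto simp: fps_supported_def) (metis add.right_neutral)

lemma fps_supported_uminus: "p \<in> fps_supported A \<Longrightarrow> - p \<in> fps_supported A"
  by (auto simp: fps_supported_def)

lemma fps_supported_diff: "p \<in> fps_supported A \<Longrightarrow> q \<in> fps_supported A \<Longrightarrow> p - q \<in> fps_supported A"
  by (auto simp: fps_supported_def) (metis diff_zero)

lemma fps_supported_mono: "A \<subseteq> B \<Longrightarrow> fps_supported A \<subseteq> fps_supported B"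
  by (auto simp: fps_supported_def)

lemma X_power_in_fps_supported: "n \<in> A \<Longrightarrow> fps_X ^ n \<in> fps_supported A"
  by (auto simp: fps_supported_def)

lemma fps_const_in_fps_supported: "0 \<in> A \<Longrightarrow> fps_const x \<in> fps_supported A"
  by (auto simp: fps_supported_def)

lemma fps_supported_mult:
  assumes "p \<in> fps_supported A" "q \<in> fps_supported B" "\<And>x y. x \<in> A \<Longrightarrow> y \<in> B \<Longrightarrow> x + y \<in> C"
  shows "p * q \<in> fps_supported C"
  unfolding fps_supported_iff
proof (intro allI impI)
  fix n
  assume "(p * q) $ n \<noteq> 0"
  then obtain i where i: "i \<in> {0..n}" "p $ i * q $ (n - i) \<noteq> 0"
    unfolding fps_mult_nth by (meson sum.neutral)
  then have "p $ i \<noteq> 0" "q $ (n - i) \<noteq> 0"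
    by auto
  then have "i \<in> A" "n - i \<in> B"
    using assms(1,2) by (auto simp: fps_supported_def)
  then show "n \<in> C"
    using assms(3) i(1) by fastforce
qed

lemma fps_supported_sum:
  "finite S \<Longrightarrow> (\<And>i. i \<in> S \<Longrightarrow> g i \<in> fps_supported A) \<Longrightarrow> sum g S \<in> fps_supported A"
  by (induction S rule: finite_induct) (auto intro: fps_supported_add)

lemma fps_supported_psubset:
  assumes "A \<subseteq> B" "b \<in> B" "b \<notin> A"
  shows "fps_supported A \<subset> (fps_supported B :: 'a::comm_ring_1 fps set)"
proof -
  have "fps_X ^ b \<in> (fps_supported B :: 'a fps set) - fps_supported A"
    using assms(2,3) by (auto simp: fps_supported_def)
  then show ?thesis
    using fps_supported_mono[OF assms(1)] by blast
qed

lemma is_submod_fps_supported: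
  assumes "\<And>h x. h \<in> H \<Longrightarrow> x \<in> A \<Longrightarrow> h + x \<in> A"
  shows "is_submod (fps_supported H) (fps_supported A :: 'a::comm_ring_1 fps set)"
  unfolding is_submod_def
  using fps_supported_mult[where C = A] assms by (auto intro: fps_supported_add)

lemma monomial_module_subset:
  "monomial_module (semigroup_ring H) e r \<subseteq> fps_supported (\<Union>k\<in>{1..r}. (+) (e k) ` H)"
proof
  fix x
  assume "x \<in> monomial_module (semigroup_ring H) e r"
  then obtain g where x: "x = (\<Sum>k\<in>{1..r}. g k * fps_X ^ e k)"
    and g: "\<forall>k\<in>{1..r}. g k \<in> fps_supported H"
    unfolding monomial_module_def semigroup_ring_eq_fps_supported by blast
  have "g k * fps_X ^ e k \<in> fps_supported (\<Union>k\<in>{1..r}. (+) (e k) ` H)" if "k \<in> {1..r}" for k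
    using g that by (intro fps_supported_mult[of _ H _ "{e k}"] X_power_in_fps_supported)
      (force simp: add.commute)+
  then show "x \<in> fps_supported (\<Union>k\<in>{1..r}. (+) (e k) ` H)"
    unfolding x by (intro fps_supported_sum) auto
qed

lemma in_monomial_module:
  fixes p :: "'a::field fps"
  assumes p: "p \<in> fps_supported (\<Union>k\<in>{1..r}. (+) (e k) ` H)" (is "_ \<in> fps_supported ?E")
  shows "p \<in> monomial_module (semigroup_ring H) e r"
proof -
  define P where "P = (\<lambda>n k. k \<in> {1..r} \<and> e k \<le> n \<and> n - e k \<in> H)"
  \<comment> \<open>Each exponent \<open>n\<close> of \<open>p\<close> is attributed to the least \<open>k\<close> with \<open>n \<in> e k + H\<close>.\<close>
  define idx where "idx = (\<lambda>n. LEAST k. P n k)"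
  have idx: "P n (idx n)" if n: "n \<in> ?E" for n
  proof -
    obtain k h where "k \<in> {1..r}" "h \<in> H" "n = e k + h"
      using n by blast
    then have "P n k" by (simp add: P_def)
    then show ?thesis unfolding idx_def by (rule LeastI)
  qed
  define g where "g = (\<lambda>k. Abs_fps (\<lambda>m. if idx (m + e k) = k then p $ (m + e k) else 0))"
  have g: "g k \<in> fps_supported H" if "k \<in> {1..r}" for k
    unfolding fps_supported_iff
  proof (intro allI impI)
    fix m
    assume "g k $ m \<noteq> 0"
    then have "idx (m + e k) = k" "p $ (m + e k) \<noteq> 0"
      by (auto simp: g_def split: if_splits)
    moreover have "m + e k \<in> ?E"
      using p calculation(2) unfolding fps_supported_iff by blast
    ultimately show "m \<in> H"
      using idx[of "m + e k"] by (simp add: P_def)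
  qed
  have "p = (\<Sum>k\<in>{1..r}. g k * fps_X ^ e k)"
  proof (rule fps_ext)
    fix n
    have "(\<Sum>k\<in>{1..r}. g k * fps_X ^ e k) $ n
        = (\<Sum>k\<in>{1..r}. if n < e k then 0 else g k $ (n - e k))"
      by (simp add: fps_sum_nth fps_X_power_mult_right_nth)
    also have "\<dots> = (\<Sum>k\<in>{1..r}. if k = idx n \<and> e k \<le> n then p $ n else 0)"
      by (rule sum.cong) (auto simp: g_def)
    also have "\<dots> = p $ n"
    proof (cases "n \<in> ?E")
      case True
      have "(\<Sum>k\<in>{1..r}. if k = idx n \<and> e k \<le> n then p $ n else 0)
          = (\<Sum>k\<in>{1..r}. if k = idx n then p $ n else 0)"
        by (rule sum.cong) (use idx[OF True] in \<open>auto simp: P_def\<close>)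
      then show ?thesis
        using idx[OF True] by (simp add: P_def)
    next
      case False
      then have "p $ n = 0"
        using fps_supported_nth[OF p] by blast
      then show ?thesis by (simp add: sum.neutral)
    qed
    finally show "p $ n = (\<Sum>k\<in>{1..r}. g k * fps_X ^ e k) $ n" by simp
  qed
  then show ?thesis
    unfolding monomial_module_def semigroup_ring_eq_fps_supported using g by blast
qed

lemma monomial_module_semigroup_ring:
  "monomial_module (semigroup_ring H :: 'a::field fps set) e r
    = fps_supported (\<Union>k\<in>{1..r}. (+) (e k) ` H)"
  using monomial_module_subset in_monomial_module by blast

section \<open>Monomial subrings and submodules of \<open>k[[t]]\<close>\<close>

inductive_set add_closure :: "nat set \<Rightarrow> nat set" for E where
  base: "x \<in> E \<Longrightarrow> x \<in> add_closure E"
| add: "x \<in> add_closure E \<Longrightarrow> y \<in> add_closure E \<Longrightarrow> x + y \<in> add_closure E"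

lemma X_power_add_closure_in_mult_closed:
  assumes "fps_supported E \<subseteq> T" "\<forall>x\<in>T. \<forall>y\<in>T. x * y \<in> T"
  shows "\<sigma> \<in> add_closure E \<Longrightarrow> fps_X ^ \<sigma> \<in> (T :: 'a::comm_ring_1 fps set)"
proof (induction rule: add_closure.induct)
  case (base x)
  then show ?case
    using assms(1) X_power_in_fps_supported by blast
next
  case (add x y)
  then show ?case
    using assms(2) by (simp add: power_add)
qed

lemma fps_supported_add_closure_subset:
  fixes T :: "'a::comm_ring_1 fps set"
  assumes "0 \<in> H" "finite (add_closure E - E)"
    and T: "fps_supported H \<union> fps_supported E \<subseteq> T"
    and closed: "\<forall>x\<in>T. \<forall>y\<in>T. x + y \<in> T \<and> x * y \<in> T \<and> - x \<in> T"
  shows "fps_supported (add_closure E) \<subseteq> T"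
proof
  fix p :: "'a fps"
  assume p: "p \<in> fps_supported (add_closure E)"
  define D where "D = add_closure E - E"
  \<comment> \<open>Split \<open>p\<close> into its part supported on \<open>E\<close> and finitely many monomials of degree in \<open>D\<close>.\<close>
  define pE where "pE = Abs_fps (\<lambda>n. if n \<in> E then p $ n else 0)"
  have "pE \<in> fps_supported E"
    by (simp add: fps_supported_def pE_def)
  then have pE_T: "pE \<in> T"
    using T by blast
  have sum_in_T: "(\<Sum>d\<in>A. fps_const (p $ d) * fps_X ^ d) \<in> T" if "finite A" "A \<subseteq> D" for A
    using that
  proof (induction A rule: finite_induct)
    case empty
    then show ?case
      using T by auto
  next
    case (insert d A)
    have "fps_const (p $ d) \<in> T"
      using T fps_const_in_fps_supported[OF assms(1)] by blast
    moreover have "fps_X ^ d \<in> T"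
      using insert(4) T closed X_power_add_closure_in_mult_closed[of E T d] by (auto simp: D_def)
    ultimately show ?case
      using insert closed by simp
  qed
  have "p = pE + (\<Sum>d\<in>D. fps_const (p $ d) * fps_X ^ d)"
  proof (rule fps_ext)
    fix n
    have "(\<Sum>d\<in>D. fps_const (p $ d) * fps_X ^ d) $ n = (\<Sum>d\<in>D. if d = n then p $ n else 0)"
      unfolding fps_sum_nth by (rule sum.cong) auto
    also have "\<dots> = (if n \<in> D then p $ n else 0)"
      using assms(2) by (simp add: D_def sum.delta)
    finally show "p $ n = (pE + (\<Sum>d\<in>D. fps_const (p $ d) * fps_X ^ d)) $ n"
      using p by (auto simp: pE_def D_def fps_supported_def)
  qed
  moreover have "(\<Sum>d\<in>D. fps_const (p $ d) * fps_X ^ d) \<in> T"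
    using sum_in_T[of D] assms(2) by (simp add: D_def)
  ultimately show "p \<in> T"
    using closed pE_T by (metis (no_types, lifting))
qed

lemma ring_adjoin_fps_supported:
  assumes "0 \<in> H" "H \<subseteq> E" "finite (add_closure E - E)"
  shows "ring_adjoin (fps_supported H) (fps_supported E)
    = (fps_supported (add_closure E) :: 'a::comm_ring_1 fps set)"
proof (rule equalityI)
  show "ring_adjoin (fps_supported H) (fps_supported E) \<subseteq> (fps_supported (add_closure E) :: 'a fps set)"
    unfolding ring_adjoin_def
  proof (rule Inter_lower, safe)
    fix x y :: "'a fps"
    show "x \<in> fps_supported (add_closure E)" if "x \<in> fps_supported H"
      using that assms(2) fps_supported_mono[of H "add_closure E"] by (blast intro: add_closure.base)
    show "x \<in> fps_supported (add_closure E)" if "x \<in> fps_supported E"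
      using that fps_supported_mono[of E "add_closure E"] by (blast intro: add_closure.base)
    assume xy: "x \<in> fps_supported (add_closure E)" "y \<in> fps_supported (add_closure E)"
    then show "x + y \<in> fps_supported (add_closure E)"
      by (rule fps_supported_add)
    show "- x \<in> fps_supported (add_closure E)"
      using xy(1) by (rule fps_supported_uminus)
    show "x * y \<in> fps_supported (add_closure E)"
      using xy by (rule fps_supported_mult) (rule add_closure.add)
  qed
next
  show "fps_supported (add_closure E) \<subseteq> (ring_adjoin (fps_supported H) (fps_supported E) :: 'a fps set)"
    unfolding ring_adjoin_def
    by (rule Inter_greatest) (use fps_supported_add_closure_subset[OF assms(1,3)] in blast)
qed

lemma not_length_ge_2_if_single_gap:
  assumes "0 \<in> H" "S - E = {d}"
  shows "\<not> length_ge (fps_supported H :: 'a::field fps set) (fps_supported E) (fps_supported S) 2"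
proof
  assume "length_ge (fps_supported H :: 'a fps set) (fps_supported E) (fps_supported S) 2"
  then obtain L :: "nat \<Rightarrow> 'a fps set" where L: "L 0 = fps_supported E" "L 2 = fps_supported S"
    "\<forall>i\<le>2. is_submod (fps_supported H) (L i)" "\<forall>i<2. L i \<subset> L (Suc i)"
    unfolding length_ge_def by blast
  have "L 0 \<subset> L 1" "L 1 \<subset> L 2" "is_submod (fps_supported H) (L 1)"
    using L(4)[rule_format, of 0] L(4)[rule_format, of 1] L(3)[rule_format, of 1]
    by (simp_all add: numeral_2_eq_2)
  note M = this[unfolded L(1,2)]
  have in_E: "x \<in> fps_supported E" if "x \<in> fps_supported S" "x $ d = 0" for x :: "'a fps"
    using that assms(2) by (auto simp: fps_supported_def)
  obtain p where p: "p \<in> L 1" "p \<notin> fps_supported E"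
    using M(1) by blast
  obtain q where q: "q \<in> fps_supported S" "q \<notin> L 1"
    using M(2) by blast
  have pS: "p \<in> fps_supported S"
    using p(1) M(2) by blast
  then have "p $ d \<noteq> 0"
    using in_E p(2) by blast
  \<comment> \<open>Over a field, \<open>q\<close> is a scalar multiple of \<open>p\<close> modulo monomials of degree in \<open>E\<close>.\<close>
  define q' where "q' = q - fps_const (q $ d / p $ d) * p"
  have "q' \<in> fps_supported S"
    unfolding q'_def using q(1) pS
    by (intro fps_supported_diff fps_supported_mult[OF fps_const_in_fps_supported[of "{0}"]]) auto
  moreover have "q' $ d = 0"
    using \<open>p $ d \<noteq> 0\<close> by (simp add: q'_def)
  ultimately have "q' \<in> L 1"
    using in_E M(1) by blast
  moreover have "fps_const (q $ d / p $ d) * p \<in> L 1"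
    using M(3) p(1) fps_const_in_fps_supported[OF assms(1)] unfolding is_submod_def by blast
  ultimately have "q' + fps_const (q $ d / p $ d) * p \<in> L 1"
    using M(3) by (simp add: is_submod_def)
  then show False
    using q(2) by (simp add: q'_def)
qed

lemma length_ge_3_if_three_gaps:
  assumes E_closed: "\<And>h x. h \<in> H \<Longrightarrow> x \<in> E \<Longrightarrow> h + x \<in> E"
    and S_closed: "\<And>h x. h \<in> H \<Longrightarrow> x \<in> S \<Longrightarrow> h + x \<in> S"
    and gaps: "u \<in> S - E" "v \<in> S - E" "w \<in> S - E" "u < v" "v < w"
    and "E \<subseteq> S"
  shows "length_ge (fps_supported H :: 'a::comm_ring_1 fps set) (fps_supported E) (fps_supported S) 3"
proof -
  define U where "U t = E \<union> {\<sigma> \<in> S. t \<le> \<sigma>}" for t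
  define L :: "nat \<Rightarrow> 'a fps set" where "L i = fps_supported
    (if i = 0 then E else if i = 1 then U w else if i = 2 then U v else S)" for i
  have U_closed: "h + x \<in> U t" if "h \<in> H" "x \<in> U t" for h x t
    using that E_closed S_closed by (auto simp: U_def)
  have "is_submod (fps_supported H) (L i)" for i
    unfolding L_def using E_closed S_closed U_closed by (auto intro!: is_submod_fps_supported)
  moreover have "L i \<subset> L (Suc i)" if "i < 3" for i
  proof -
    have "fps_supported E \<subset> (fps_supported (U w) :: 'a fps set)"
      by (rule fps_supported_psubset[of _ _ w]) (use gaps in \<open>auto simp: U_def\<close>)
    moreover have "fps_supported (U w) \<subset> (fps_supported (U v) :: 'a fps set)"
      by (rule fps_supported_psubset[of _ _ v]) (use gaps in \<open>auto simp: U_def\<close>)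
    moreover have "fps_supported (U v) \<subset> (fps_supported S :: 'a fps set)"
      by (rule fps_supported_psubset[of _ _ u]) (use gaps \<open>E \<subseteq> S\<close> in \<open>auto simp: U_def\<close>)
    ultimately show ?thesis
      using that by (auto simp: L_def less_Suc_eq numeral_3_eq_3)
  qed
  ultimately show ?thesis
    unfolding length_ge_def by (intro exI[of _ L]) (auto simp: L_def)
qed

section \<open>Pseudo-Frobenius numbers\<close>

locale pf_numerical_semigroup =
  fixes a :: "nat \<Rightarrow> nat" and l :: nat and H :: "nat set"
    and f :: int and c :: "nat \<Rightarrow> int" and r :: nat
  assumes gens_pos: "\<forall>i\<in>{1..l}. a i > 0"
    and gcd1: "Gcd (a ` {1..l}) = 1"
    and H_def: "H = semigroup_gen a l"
    and f_def: "f = frobenius H"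
    and c_mono: "strict_mono_on {1..r} c"
    and c_PF: "c ` {1..r} = pseudo_frobenius H a l"
begin

abbreviation "PF \<equiv> pseudo_frobenius H a l"

lemma zero_in_H: "0 \<in> H"
  using zero_in_semigroup_gen H_def by simp

lemma add_in_H: "x \<in> H \<Longrightarrow> y \<in> H \<Longrightarrow> x + y \<in> H"
  using add_in_semigroup_gen H_def by simp

lemma generator_in_H: "i \<in> {1..l} \<Longrightarrow> a i \<in> H"
  using generator_in_semigroup_gen H_def by simp

lemma H_minus_generator: "h \<in> H \<Longrightarrow> h \<noteq> 0 \<Longrightarrow> \<exists>j\<in>{1..l}. a j \<le> h \<and> h - a j \<in> H"
  using semigroup_gen_minus_generator H_def by simp

lemma f_not_in_H: "f \<notin> int ` H"
  and le_f: "z \<notin> int ` H \<Longrightarrow> z \<le> f"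
proof -
  obtain N where "\<forall>n\<ge>N. n \<in> H"
    using semigroup_gen_cofinite[OF gcd1] H_def by auto
  then show "f \<notin> int ` H" and "z \<notin> int ` H \<Longrightarrow> z \<le> f"
    unfolding f_def using frobenius_greatest[of N H] by auto
qed

lemma gt_f_in_H: "f < z \<Longrightarrow> z \<in> int ` H"
  using le_f by force

lemma PF_add_in_H:
  assumes "z \<in> PF" "h \<in> H" "h \<noteq> 0"
  shows "z + int h \<in> int ` H"
proof -
  obtain j where j: "j \<in> {1..l}" "a j \<le> h" "h - a j \<in> H"
    using H_minus_generator assms(2,3) by blast
  have "z + int (a j) \<in> int ` H"
    using assms(1) j(1) by (auto simp: pseudo_frobenius_def)
  then obtain m where m: "m \<in> H" "z + int (a j) = int m"
    by blast
  have "z + int h = int (m + (h - a j))"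
    using m j(2) by simp
  then show ?thesis
    using add_in_H[OF m(1) j(3)] by blast
qed

lemma f_in_PF: "f \<in> PF"
  using f_not_in_H gt_f_in_H gens_pos by (auto simp: pseudo_frobenius_def)

lemma PF_le_f: "z \<in> PF \<Longrightarrow> z \<le> f"
  using le_f by (auto simp: pseudo_frobenius_def)

lemma PF_nonneg:
  assumes "z \<in> PF" "z \<noteq> f"
  shows "0 \<le> z"
proof (rule ccontr)
  assume "\<not> 0 \<le> z"
  \<comment> \<open>Then \<open>f - z > f\<close> would lie in \<open>H\<close>, so \<open>f = z + (f - z) \<in> H\<close>.\<close>
  define h where "h = nat (f - z)"
  have h: "int h = f - z" "h \<noteq> 0"
    using PF_le_f[OF assms(1)] assms(2) by (auto simp: h_def)
  then have "h \<in> H"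
    using gt_f_in_H[of "int h"] \<open>\<not> 0 \<le> z\<close> by auto
  then have "z + int h \<in> int ` H"
    using PF_add_in_H assms(1) h(2) by blast
  then show False
    using h(1) f_not_in_H by simp
qed

lemma r_pos: "1 \<le> r"
  using c_PF f_in_PF by (cases "r = 0") auto

lemma c_less_iff:
  assumes "i \<in> {1..r}" "j \<in> {1..r}"
  shows "c i < c j \<longleftrightarrow> i < j"
  using strict_mono_onD[OF c_mono assms(1,2)] strict_mono_onD[OF c_mono assms(2,1)]
  by (cases i j rule: linorder_cases) auto

lemma c_in_PF: "i \<in> {1..r} \<Longrightarrow> c i \<in> PF"
  using c_PF by blast

lemma c_r_eq_f: "c r = f"
proof -
  obtain k where k: "k \<in> {1..r}" "c k = f"
    using f_in_PF c_PF by (metis imageE)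
  have "c r \<le> f"
    using PF_le_f c_in_PF r_pos by auto
  then have "\<not> k < r"
    using c_less_iff[OF k(1), of r] k(2) r_pos by auto
  then show ?thesis
    using k by auto
qed

lemma c_lt_f: "k \<in> {1..<r} \<Longrightarrow> c k < f"
  using c_less_iff[of k r] c_r_eq_f r_pos by auto

lemma c_nonneg:
  assumes "k \<in> {1..<r}"
  shows "0 \<le> c k"
proof -
  have "c k \<noteq> f"
    using c_lt_f[OF assms] by simp
  then show ?thesis
    using PF_nonneg c_in_PF assms by auto
qed

end

locale proper_numerical_semigroup = pf_numerical_semigroup +
  assumes f_nonneg: "0 \<le> f"
begin

definition F :: nat where "F = nat f"
definition cn :: "nat \<Rightarrow> nat" where "cn k = nat (c k)"
definition e :: "nat \<Rightarrow> nat" where "e k = nat (f - c k)"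

text \<open>The exponents of the canonical ideal \<open>K = \<Sum>\<^sub>k R t\<^bsup>e k\<^esup>\<close>.\<close>
definition E :: "nat set" where "E = (\<Union>k\<in>{1..r}. (+) (e k) ` H)"

definition shift_gaps :: "nat \<Rightarrow> bool" where
  "shift_gaps t \<longleftrightarrow> (\<forall>k\<in>{1..<r}. e k + t \<notin> H)"

lemma int_F: "int F = f"
  using f_nonneg by (simp add: F_def)

lemma c_range: "k \<in> {1..r} \<Longrightarrow> 0 \<le> c k \<and> c k \<le> f"
  using c_nonneg c_lt_f c_r_eq_f f_nonneg by (cases "k < r") force+

lemma int_cn: "k \<in> {1..r} \<Longrightarrow> int (cn k) = c k"
  using c_range by (simp add: cn_def)

lemma cn_le_F: "k \<in> {1..r} \<Longrightarrow> cn k \<le> F"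
  using c_range int_cn int_F by fastforce

lemma cn_lt_F: "k \<in> {1..<r} \<Longrightarrow> cn k < F"
  using c_lt_f int_cn int_F by fastforce

lemma e_eq: "k \<in> {1..r} \<Longrightarrow> e k = F - cn k"
  using c_range by (simp add: e_def F_def cn_def nat_diff_distrib)

lemma e_r: "e r = 0"
  using c_r_eq_f by (simp add: e_def)

lemma cn_less_iff: "i \<in> {1..r} \<Longrightarrow> j \<in> {1..r} \<Longrightarrow> cn i < cn j \<longleftrightarrow> i < j"
  using int_cn c_less_iff by (metis of_nat_less_iff)

lemma F_not_in_H: "F \<notin> H"
  using f_not_in_H int_F by force

lemma gt_F_in_H: "F < n \<Longrightarrow> n \<in> H"
  using gt_f_in_H[of "int n"] int_F by auto

lemma cn_not_in_H: "k \<in> {1..r} \<Longrightarrow> cn k \<notin> H"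
  using c_in_PF int_cn by (force simp: pseudo_frobenius_def)

lemma cn_add_in_H:
  assumes "k \<in> {1..r}" "h \<in> H" "h \<noteq> 0"
  shows "cn k + h \<in> H"
proof -
  have "int (cn k) + int h \<in> int ` H"
    using PF_add_in_H[OF c_in_PF[OF assms(1)] assms(2,3)] int_cn[OF assms(1)] by simp
  then show ?thesis
    by (metis image_iff of_nat_add of_nat_eq_iff)
qed

lemma gap_below_pseudo_frobenius: "g \<notin> H \<Longrightarrow> \<exists>k\<in>{1..r}. \<exists>h\<in>H. g + h = cn k"
proof (induction "F - g" arbitrary: g rule: less_induct)
  case less
  show ?case
  proof (cases "\<forall>i\<in>{1..l}. g + a i \<in> H")
    case True
    then have "int g \<in> PF"
      using less.prems by (force simp: pseudo_frobenius_def)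
    then obtain k where "k \<in> {1..r}" "c k = int g"
      using c_PF by (metis imageE)
    then show ?thesis
      using zero_in_H by (force simp: cn_def)
  next
    case False
    then obtain i where i: "i \<in> {1..l}" "g + a i \<notin> H"
      by blast
    have "g + a i \<le> F"
      using i(2) gt_F_in_H by (meson not_le)
    moreover have "0 < a i"
      using gens_pos i(1) by blast
    ultimately have "F - (g + a i) < F - g"
      by simp
    then obtain k h where "k \<in> {1..r}" "h \<in> H" "g + a i + h = cn k"
      using less.hyps i(2) by blast
    then show ?thesis
      using add_in_H[OF generator_in_H[OF i(1)]] by (metis add.assoc)
  qed
qed

lemma in_E: "n \<in> E \<longleftrightarrow> (\<exists>k\<in>{1..r}. \<exists>h\<in>H. n = e k + h)"
  by (auto simp: E_def)

lemma H_subset_E: "H \<subseteq> E"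
proof
  fix n
  assume "n \<in> H"
  then show "n \<in> E"
    using e_r r_pos unfolding in_E by force
qed

lemma in_E_iff: "n \<in> E \<longleftrightarrow> (n \<le> F \<longrightarrow> F - n \<notin> H)"
proof
  assume "n \<in> E"
  then obtain k h where kh: "k \<in> {1..r}" "h \<in> H" "n = e k + h"
    unfolding in_E by blast
  show "n \<le> F \<longrightarrow> F - n \<notin> H"
  proof (intro impI notI)
    assume "n \<le> F" "F - n \<in> H"
    then have "cn k = (F - n) + h"
      using kh e_eq[OF kh(1)] cn_le_F[OF kh(1)] by simp
    then show False
      using add_in_H[OF \<open>F - n \<in> H\<close> kh(2)] cn_not_in_H[OF kh(1)] by simp
  qed
next
  assume gap: "n \<le> F \<longrightarrow> F - n \<notin> H"
  show "n \<in> E"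
  proof (cases "n \<le> F")
    case False
    then show ?thesis
      using gt_F_in_H H_subset_E by auto
  next
    case True
    then obtain k h where kh: "k \<in> {1..r}" "h \<in> H" "F - n + h = cn k"
      using gap_below_pseudo_frobenius gap by blast
    then have "n = e k + h"
      using e_eq[OF kh(1)] cn_le_F[OF kh(1)] True by simp
    then show ?thesis
      using kh unfolding in_E by blast
  qed
qed

lemma add_in_E:
  assumes "h \<in> H" "n \<in> E"
  shows "h + n \<in> E"
proof -
  obtain k h' where "k \<in> {1..r}" "h' \<in> H" "n = e k + h'"
    using assms(2) unfolding in_E by blast
  then have "k \<in> {1..r}" "h' + h \<in> H" "h + n = e k + (h' + h)"
    using add_in_H assms(1) by auto
  then show ?thesis
    unfolding in_E by blast
qed

lemma e_in_E: "k \<in> {1..r} \<Longrightarrow> e k \<in> E"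
  unfolding in_E using zero_in_H by force

lemma e_not_in_H: "k \<in> {1..<r} \<Longrightarrow> e k \<notin> H"
  using cn_add_in_H[of k "e k"] e_eq[of k] cn_lt_F[of k] F_not_in_H by fastforce

lemma cn_in_E: "k \<in> {1..<r} \<Longrightarrow> cn k \<in> E"
  using e_not_in_H e_eq cn_lt_F unfolding in_E_iff by (simp add: diff_diff_cancel less_imp_le)

lemma e_minus_not_in_E:
  assumes "k \<in> {1..r}" "h \<in> H" "h \<noteq> 0" "h \<le> e k"
  shows "e k - h \<notin> E"
  using e_eq[OF assms(1)] cn_le_F[OF assms(1)] assms(4) cn_add_in_H[OF assms(1-3)]
  unfolding in_E_iff by (simp add: add.commute)

end

section \<open>The \<open>2\<close>-AGL semigroup ring\<close>

locale two_agl_semigroup_ring = pf_numerical_semigroup +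
  fixes R K RK cc :: "'a::field fps set"
  assumes R_def: "R = semigroup_ring H"
    and K_def: "K = monomial_module R (\<lambda>i. nat (f - c i)) r"
    and RK_def: "RK = ring_adjoin R K"
    and cc_def: "cc = colon R RK"
    and two_agl: "module_length_eq R K RK 2"
begin

lemma R_eq: "R = fps_supported H"
  by (simp add: R_def semigroup_ring_eq_fps_supported)

lemma R_closed:
  "p \<in> R \<Longrightarrow> q \<in> R \<Longrightarrow> p * q \<in> R" "p \<in> R \<Longrightarrow> q \<in> R \<Longrightarrow> p + q \<in> R"
  "p \<in> R \<Longrightarrow> - p \<in> R" "p \<in> R \<Longrightarrow> q \<in> R \<Longrightarrow> p - q \<in> R" "fps_const x \<in> R" "0 \<in> R"
  unfolding R_eq
  by (auto intro: fps_supported_mult add_in_H fps_supported_add fps_supported_uminus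
      fps_supported_diff fps_const_in_fps_supported zero_in_H)

lemma X_power_in_R: "n \<in> H \<Longrightarrow> fps_X ^ n \<in> R"
  unfolding R_eq by (rule X_power_in_fps_supported)

lemma r_ge_2: "2 \<le> r"
proof (rule ccontr)
  assume "\<not> 2 \<le> r"
  then have "r = 1"
    using r_pos by simp
  \<comment> \<open>A Gorenstein ring: \<open>K = R = R[K]\<close>.\<close>
  have "K = fps_supported (\<Union>k\<in>{1..r}. (+) (nat (f - c k)) ` H)"
    unfolding K_def R_def by (rule monomial_module_semigroup_ring)
  also have "\<dots> = R"
    using \<open>r = 1\<close> c_r_eq_f by (simp add: R_eq)
  finally have KR: "K = R" .
  have "RK \<subseteq> R"
    unfolding RK_def ring_adjoin_def KR by (rule Inter_lower) (auto intro: R_closed)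
  moreover have "R \<subseteq> RK"
    unfolding RK_def ring_adjoin_def by auto
  ultimately have "RK = K"
    using KR by blast
  moreover obtain L where L: "L 0 = K" "L 2 = RK" "\<forall>i<2. L i \<subset> L (Suc i)"
    using two_agl unfolding module_length_eq_def length_ge_def by blast
  moreover have "L 0 \<subset> L 1" "L 1 \<subset> L 2"
    using L(3)[rule_format, of 0] L(3)[rule_format, of 1] by (simp_all add: numeral_2_eq_2)
  ultimately show False
    by auto
qed

lemma f_pos: "0 < f"
  using c_nonneg[of 1] c_lt_f[of 1] r_ge_2 by simp

end

sublocale two_agl_semigroup_ring \<subseteq> proper_numerical_semigroup
  using f_pos by unfold_locales simp

context two_agl_semigroup_ring
begin

abbreviation S where "S \<equiv> add_closure E"

abbreviation D where "D \<equiv> S - E"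

lemma K_eq: "K = fps_supported E"
  by (simp add: K_def R_def monomial_module_semigroup_ring E_def e_def)

lemma K_closed: "g \<in> R \<Longrightarrow> x \<in> K \<Longrightarrow> g * x \<in> K" "x \<in> K \<Longrightarrow> y \<in> K \<Longrightarrow> x + y \<in> K"
  unfolding R_eq K_eq by (auto intro: fps_supported_mult add_in_E fps_supported_add)

lemma R_subset_K: "R \<subseteq> K"
  unfolding R_eq K_eq by (rule fps_supported_mono[OF H_subset_E])

lemma E_subset_S: "E \<subseteq> S"
  by (auto intro: add_closure.base)

lemma add_in_S: "h \<in> H \<Longrightarrow> \<sigma> \<in> S \<Longrightarrow> h + \<sigma> \<in> S"
  using H_subset_E by (blast intro: add_closure.add add_closure.base)

lemma D_le_F: "d \<in> D \<Longrightarrow> d \<le> F"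
  using gt_F_in_H H_subset_E by (meson DiffD2 not_le subsetD)

lemma finite_D: "finite D"
  using D_le_F by (meson finite_atMost finite_subset subsetI atMost_iff)

lemma RK_eq: "RK = fps_supported S"
  unfolding RK_def R_eq K_eq
  using ring_adjoin_fps_supported[OF zero_in_H H_subset_E finite_D] by simp

lemma F_in_D: "F \<in> D"
proof -
  have k: "1 \<in> {1..<r}"
    using r_ge_2 by simp
  then have "e 1 + cn 1 = F"
    using e_eq cn_le_F by simp
  moreover have "e 1 \<in> S" "cn 1 \<in> S"
    using e_in_E cn_in_E k E_subset_S by auto
  ultimately have "F \<in> S"
    by (metis add_closure.add)
  moreover have "F \<notin> E"
    unfolding in_E_iff using zero_in_H by simp
  ultimately show ?thesis
    by blast
qed

lemma card_D: "card D = 2"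
proof -
  have "card D \<ge> 2"
  proof (rule ccontr)
    assume "\<not> card D \<ge> 2"
    then have "\<forall>x\<in>D. \<forall>y\<in>D. x = y"
      using finite_D card_le_Suc0_iff_eq by fastforce
    then have "D = {F}"
      using F_in_D by blast
    then have "\<not> length_ge R K RK 2"
      unfolding R_eq K_eq RK_eq by (rule not_length_ge_2_if_single_gap[OF zero_in_H])
    then show False
      using two_agl by (simp add: module_length_eq_def)
  qed
  moreover have "\<not> card D \<ge> 3"
  proof
    assume "card D \<ge> 3"
    then obtain u v w where "u \<in> D" "v \<in> D" "w \<in> D" "u < v" "v < w"
      using three_increasing_elements finite_D by blast
    then have "length_ge R K RK 3"
      unfolding R_eq K_eq RK_eq
      by (intro length_ge_3_if_three_gaps[of H E S u v w] add_in_E add_in_S E_subset_S)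
    then show False
      using two_agl by (simp add: module_length_eq_def numeral_3_eq_3)
  qed
  ultimately show ?thesis
    by simp
qed

definition s :: nat where "s = F - Min D"

lemma D_eq: "D = {F - s, F}" and s_pos: "0 < s"
proof -
  have "card (D - {F}) = 1"
    using card_D F_in_D finite_D by (simp add: card_Diff_singleton)
  then obtain x where "D - {F} = {x}"
    by (rule card_1_singletonE)
  then have x: "D = {x, F}" "x \<noteq> F"
    using F_in_D by auto
  then have "x < F"
    using D_le_F by force
  then have "Min D = x"
    using x(1) by simp
  then show "D = {F - s, F}" "0 < s"
    using x \<open>x < F\<close> by (auto simp: s_def)
qed

lemma s_le_F: "s \<le> F"
  by (simp add: s_def)

lemma F_minus_s_in_S: "F - s \<in> S" and F_minus_s_notin_E: "F - s \<notin> E"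
  using D_eq by auto

lemma s_in_H: "s \<in> H"
  using F_minus_s_notin_E s_pos unfolding in_E_iff by (simp add: s_def)

lemma add_in_H_unless_0_s:
  assumes "h \<in> H" "\<sigma> \<in> S" "h \<noteq> 0" "h \<noteq> s"
  shows "h + \<sigma> \<in> H"
proof (rule ccontr)
  assume "h + \<sigma> \<notin> H"
  then have le: "h + \<sigma> \<le> F"
    using gt_F_in_H by (meson not_le)
  then have "F - (h + \<sigma>) \<in> E"
    unfolding in_E_iff using \<open>h + \<sigma> \<notin> H\<close> by simp
  then have "F - (h + \<sigma>) + \<sigma> \<in> S"
    using assms(2) by (blast intro: add_closure.add add_closure.base)
  moreover have "F - (h + \<sigma>) + \<sigma> = F - h" and "F - h \<notin> E"
    using le assms(1) unfolding in_E_iff by auto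
  ultimately have "F - h \<in> D"
    by simp
  then show False
    using le assms(3,4) s_le_F unfolding D_eq by auto
qed

lemma s_is_generator: "\<exists>j\<in>{1..l}. a j = s"
proof -
  obtain j where j: "j \<in> {1..l}" "a j \<le> s" "s - a j \<in> H"
    using H_minus_generator s_in_H s_pos by blast
  have "s - a j = 0"
  proof (rule ccontr)
    assume "s - a j \<noteq> 0"
    moreover have "a j \<noteq> 0"
      using gens_pos j(1) by auto
    ultimately have "a j + (F - s) \<in> H"
      using add_in_H_unless_0_s[OF generator_in_H[OF j(1)] F_minus_s_in_S] by auto
    then have "(s - a j) + (a j + (F - s)) \<in> H"
      using add_in_H j(3) by blast
    moreover have "(s - a j) + (a j + (F - s)) = F"
      using j(2) by (simp add: s_def)
    ultimately show False
      using F_not_in_H by simp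
  qed
  then show ?thesis
    using j by auto
qed

lemma X_power_in_RK: "\<sigma> \<in> S \<Longrightarrow> fps_X ^ \<sigma> \<in> RK"
  unfolding RK_eq by (rule X_power_in_fps_supported)

lemma cc_iff: "p \<in> cc \<longleftrightarrow> p \<in> R \<and> p $ 0 = 0 \<and> p $ s = 0"
proof safe
  assume p: "p \<in> cc"
  have RK: "p * fps_X ^ \<sigma> \<in> R" if "\<sigma> \<in> S" for \<sigma>
    using p X_power_in_RK[OF that] unfolding cc_def colon_def by blast
  show "p \<in> R"
    using RK[of 0] zero_in_H H_subset_E E_subset_S by auto
  have "(p * fps_X ^ F) $ F = 0" "(p * fps_X ^ (F - s)) $ F = 0"
    using RK F_in_D F_minus_s_in_S F_not_in_H unfolding R_eq fps_supported_iff by blast+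
  moreover have "(p * fps_X ^ F) $ F = p $ 0" "(p * fps_X ^ (F - s)) $ F = p $ s"
    using s_le_F by (simp_all add: fps_X_power_mult_right_nth)
  ultimately show "p $ 0 = 0" "p $ s = 0"
    by simp_all
next
  assume p: "p \<in> R" "p $ 0 = 0" "p $ s = 0"
  have "n \<in> H - {0, s}" if "p $ n \<noteq> 0" for n
    using p that unfolding R_eq fps_supported_iff by (cases "n = 0") auto
  then have "p \<in> fps_supported (H - {0, s})"
    unfolding fps_supported_iff by blast
  then have "p * y \<in> R" if "y \<in> RK" for y
    using that add_in_H_unless_0_s unfolding R_eq RK_eq by (auto intro: fps_supported_mult)
  then show "p \<in> cc"
    unfolding cc_def colon_def by blast
qed

lemma cc_closed:
  "0 \<in> cc" "p \<in> cc \<Longrightarrow> q \<in> cc \<Longrightarrow> p + q \<in> cc" "p \<in> cc \<Longrightarrow> q \<in> cc \<Longrightarrow> p - q \<in> cc"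
  "g \<in> R \<Longrightarrow> p \<in> cc \<Longrightarrow> g * p \<in> cc"
  by (auto simp: cc_def colon_def distrib_right left_diff_distrib mult.assoc intro: R_closed)

lemma gap_decomposition:
  assumes "z \<in> E" "z \<notin> H"
  shows "\<exists>m\<in>{1..<r}. z = e m \<or> z = e m + s"
proof -
  obtain m h where mh: "m \<in> {1..r}" "h \<in> H" "z = e m + h"
    using assms(1) unfolding in_E by blast
  have "m \<noteq> r"
    using mh assms(2) e_r by auto
  moreover have "h = 0 \<or> h = s"
    using add_in_H_unless_0_s[OF mh(2) E_subset_S[THEN subsetD, OF e_in_E[OF mh(1)]]] mh(3) assms(2)
    by (auto simp: add.commute)
  ultimately show ?thesis
    using mh by auto
qed

lemma pseudo_frobenius_partner:
  assumes "shift_gaps s" "k \<in> {1..<r}"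
  shows "\<exists>m\<in>{1..<r}. cn k + cn m = F + s"
proof -
  obtain m where m: "m \<in> {1..<r}" "cn k = e m \<or> cn k = e m + s"
    using gap_decomposition[OF cn_in_E cn_not_in_H] assms(2) by force
  have "cn k \<noteq> e m"
  proof
    assume "cn k = e m"
    then have "e m + s \<in> H"
      using cn_add_in_H[OF _ s_in_H] s_pos assms(2) by force
    then show False
      using assms(1) m(1) unfolding shift_gaps_def by blast
  qed
  then have "cn k + cn m = F + s"
    using m e_eq cn_le_F by force
  then show ?thesis
    using m(1) by blast
qed

lemma partner_eq_reverse:
  assumes "shift_gaps s" "i \<in> {1..<r}"
  shows "cn i + cn (r - i) = F + s"
proof -
  have r1: "{1..<r} = {1..r - 1}"
    using r_ge_2 by auto
  define \<sigma> where "\<sigma> k = (SOME m. m \<in> {1..<r} \<and> cn k + cn m = F + s)" for k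
  have \<sigma>: "\<sigma> k \<in> {1..<r} \<and> cn k + cn (\<sigma> k) = F + s" if "k \<in> {1..<r}" for k
    unfolding \<sigma>_def by (rule someI_ex) (use pseudo_frobenius_partner[OF assms(1) that] in blast)
  have into: "\<sigma> k \<in> {1..r - 1}" if "k \<in> {1..r - 1}" for k
    using \<sigma>[of k] that r1 by auto
  have decreasing: "\<sigma> k' < \<sigma> k" if "k \<in> {1..r - 1}" "k' \<in> {1..r - 1}" "k < k'" for k k'
  proof -
    have kk': "k \<in> {1..<r}" "k' \<in> {1..<r}"
      using that r1 by auto
    then have "cn k < cn k'"
      using cn_less_iff that by auto
    then have "cn (\<sigma> k') < cn (\<sigma> k)"
      using \<sigma>[OF kk'(1)] \<sigma>[OF kk'(2)] by linarith
    then show ?thesis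
      using cn_less_iff[of "\<sigma> k'" "\<sigma> k"] \<sigma>[OF kk'(1)] \<sigma>[OF kk'(2)] by auto
  qed
  have "\<sigma> i = r - i"
    using decreasing_self_map_eq_reverse[of "r - 1" \<sigma>, OF into decreasing] assms(2) r1 r_ge_2 by auto
  then show ?thesis
    using \<sigma>[OF assms(2)] by simp
qed

lemma shift_gaps_imp_symmetric_sums:
  assumes "shift_gaps s"
  shows "\<exists>j\<in>{1..l}. \<forall>i\<in>{1..r-1}. f + int (a j) = c i + c (r - i)"
proof -
  obtain j where j: "j \<in> {1..l}" "a j = s"
    using s_is_generator by blast
  have "f + int (a j) = c i + c (r - i)" if "i \<in> {1..r - 1}" for i
  proof -
    have i: "i \<in> {1..<r}" "i \<in> {1..r}" "r - i \<in> {1..r}"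
      using that by auto
    then have "int (cn i + cn (r - i)) = int (F + s)"
      using partner_eq_reverse[OF assms] by simp
    then show ?thesis
      using i int_cn int_F j(2) by simp
  qed
  then show ?thesis
    using j(1) by blast
qed

lemma symmetric_sums_imp_shift_gaps:
  assumes "\<exists>j\<in>{1..l}. \<forall>i\<in>{1..r-1}. f + int (a j) = c i + c (r - i)"
  shows "shift_gaps s"
proof -
  obtain j where j: "j \<in> {1..l}" "\<forall>i\<in>{1..r-1}. f + int (a j) = c i + c (r - i)"
    using assms by blast
  have shifted: "e k + a j = cn (r - k)" if "k \<in> {1..<r}" for k
  proof -
    have "k \<in> {1..r - 1}" "k \<in> {1..r}" "r - k \<in> {1..r}"
      using that by auto
    then have "int (F + a j) = int (cn k + cn (r - k))"
      using j(2) int_cn[of k] int_cn[of "r - k"] int_F by simp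
    then show ?thesis
      using e_eq[of k] cn_le_F[of k] that by simp
  qed
  have one: "1 \<in> {1..<r}"
    using r_ge_2 by simp
  have "a j + e 1 \<notin> H"
    using shifted[OF one] cn_not_in_H[of "r - 1"] r_ge_2 by (simp add: add.commute)
  then have "a j = s"
    using add_in_H_unless_0_s[OF generator_in_H[OF j(1)] E_subset_S[THEN subsetD, OF e_in_E]]
      gens_pos j(1) one by fastforce
  show ?thesis
    unfolding shift_gaps_def
  proof
    fix k
    assume k: "k \<in> {1..<r}"
    then have "r - k \<in> {1..r}"
      by auto
    then show "e k + s \<notin> H"
      using shifted[OF k] \<open>a j = s\<close> cn_not_in_H by simp
  qed
qed


section \<open>The quotient \<open>K/R\<close>\<close>

lemma e_inj:
  assumes "k \<in> {1..r}" "m \<in> {1..r}" "e k = e m"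
  shows "k = m"
proof -
  have "cn k = cn m"
    using assms(3) e_eq[OF assms(1)] e_eq[OF assms(2)] cn_le_F[OF assms(1)] cn_le_F[OF assms(2)]
    by linarith
  then show ?thesis
    using cn_less_iff[OF assms(1,2)] cn_less_iff[OF assms(2,1)] by (cases k m rule: linorder_cases) auto
qed

lemma e_ne_e_plus_s:
  assumes "k \<in> {1..r}" "m \<in> {1..r}"
  shows "e k \<noteq> e m + s"
proof
  assume "e k = e m + s"
  then have "cn m = cn k + s"
    using e_eq assms cn_le_F[OF assms(1)] cn_le_F[OF assms(2)] by simp
  then show False
    using cn_add_in_H[OF assms(1) s_in_H] s_pos cn_not_in_H[OF assms(2)] by simp
qed

lemma mult_nth_e:
  assumes "g \<in> R" "x \<in> K" "k \<in> {1..r}"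
  shows "(g * x) $ e k = g $ 0 * x $ e k"
proof -
  have "(g * x) $ e k = (\<Sum>i = 0..e k. g $ i * x $ (e k - i))"
    by (rule fps_mult_nth)
  also have "\<dots> = g $ 0 * x $ (e k - 0)"
  proof (rule sum_eq_single)
    fix i
    assume i: "i \<in> {0..e k}" "i \<noteq> 0"
    show "g $ i * x $ (e k - i) = 0"
    proof (cases "g $ i = 0")
      case False
      then have "i \<in> H"
        using assms(1) unfolding R_eq fps_supported_iff by blast
      then have "e k - i \<notin> E"
        using e_minus_not_in_E[OF assms(3)] i by auto
      then show ?thesis
        using assms(2) unfolding K_eq by (simp add: fps_supported_nth)
    qed simp
  qed auto
  finally show ?thesis
    by simp
qed

lemma mult_nth_e_plus_s:
  assumes "shift_gaps s" "g \<in> R" "x \<in> K" "k \<in> {1..<r}"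
  shows "(g * x) $ (e k + s) = g $ 0 * x $ (e k + s) + g $ s * x $ e k"
proof -
  have "(g * x) $ (e k + s) = (\<Sum>i = 0..e k + s. g $ i * x $ (e k + s - i))"
    by (rule fps_mult_nth)
  also have "\<dots> = g $ 0 * x $ (e k + s - 0) + g $ s * x $ (e k + s - s)"
  proof (rule sum_eq_two)
    fix i
    assume i: "i \<in> {0..e k + s}" "i \<noteq> 0" "i \<noteq> s"
    show "g $ i * x $ (e k + s - i) = 0"
    proof (cases "g $ i = 0")
      case False
      then have "i \<in> H"
        using assms(2) unfolding R_eq fps_supported_iff by blast
      have "x $ (e k + s - i) = 0"
      proof (rule ccontr)
        assume "x $ (e k + s - i) \<noteq> 0"
        then have "e k + s - i \<in> S"
          using assms(3) E_subset_S unfolding K_eq fps_supported_iff by blast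
        then have "i + (e k + s - i) \<in> H"
          using add_in_H_unless_0_s \<open>i \<in> H\<close> i(2,3) by blast
        then show False
          using i(1) assms(1,4) unfolding shift_gaps_def by simp
      qed
      then show ?thesis
        by simp
    qed simp
  qed (use s_pos in auto)
  finally show ?thesis
    by simp
qed

text \<open>The \<open>i\<close>-th coordinate of the isomorphism \<open>K/R \<cong> (R/\<frak>c)\<^bsup>r-1\<^esup>\<close>: \<open>R/\<frak>c\<close> has the
  basis \<open>1, t\<^sup>s\<close>, and the class of \<open>x\<close> in the summand \<open>R t\<^bsup>e (i+1)\<^esup>\<close> is read off from
  the coefficients of \<open>x\<close> at \<open>e (i+1)\<close> and \<open>e (i+1) + s\<close>.\<close>
definition phi :: "'a fps \<Rightarrow> nat \<Rightarrow> 'a fps" where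
  "phi x i = fps_const (x $ e (Suc i)) + fps_const (x $ (e (Suc i) + s)) * fps_X ^ s"

lemma phi_nth_0: "phi x i $ 0 = x $ e (Suc i)"
  using s_pos by (simp add: phi_def fps_X_power_mult_right_nth)

lemma phi_nth_s: "phi x i $ s = x $ (e (Suc i) + s)"
  using s_pos by (simp add: phi_def fps_X_power_mult_right_nth)

lemma phi_in_R: "phi x i \<in> R"
  unfolding phi_def by (intro R_closed X_power_in_R s_in_H)

lemma phi_add: "phi (x + y) i - phi x i - phi y i = 0"
  by (simp add: phi_def algebra_simps flip: fps_const_add)

lemma phi_mult:
  assumes "shift_gaps s" "g \<in> R" "x \<in> K" "i < r - 1"
  shows "phi (g * x) i - g * phi x i \<in> cc"
proof -
  have k: "Suc i \<in> {1..<r}"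
    using assms(4) by auto
  have "g * phi x i = g * fps_const (x $ e (Suc i)) + (g * fps_const (x $ (e (Suc i) + s))) * fps_X ^ s"
    by (simp add: phi_def algebra_simps)
  then show ?thesis
    unfolding cc_iff using phi_in_R assms(2) s_pos X_power_in_R[OF s_in_H]
      mult_nth_e[OF assms(2,3), of "Suc i"] mult_nth_e_plus_s[OF assms(1-3) k] k
    by (auto intro!: R_closed simp: phi_nth_0 phi_nth_s fps_X_power_mult_right_nth)
qed

lemma phi_in_cc_iff:
  assumes "shift_gaps s" "x \<in> K"
  shows "(\<forall>i<r - 1. phi x i \<in> cc) \<longleftrightarrow> x \<in> R"
proof
  assume phi: "\<forall>i<r - 1. phi x i \<in> cc"
  have vanish: "x $ e m = 0" "x $ (e m + s) = 0" if "m \<in> {1..<r}" for m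
    using phi[rule_format, of "m - 1"] that by (auto simp: cc_iff phi_nth_0 phi_nth_s)
  show "x \<in> R"
    unfolding R_eq fps_supported_iff
  proof (intro allI impI)
    fix n
    assume n: "x $ n \<noteq> 0"
    then have "n \<in> E"
      using assms(2) unfolding K_eq fps_supported_iff by blast
    then show "n \<in> H"
      using gap_decomposition vanish n by blast
  qed
next
  assume "x \<in> R"
  moreover have "e (Suc i) \<notin> H" "e (Suc i) + s \<notin> H" if "i < r - 1" for i
    using e_not_in_H assms(1) that unfolding shift_gaps_def by auto
  ultimately have "phi x i = 0" if "i < r - 1" for i
    using that unfolding R_eq phi_def by (simp add: fps_supported_nth)
  then show "\<forall>i<r - 1. phi x i \<in> cc"
    using cc_closed(1) by simp
qed

lemma phi_surj:
  assumes "\<forall>i<r - 1. y i \<in> R"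
  shows "\<exists>x\<in>K. \<forall>i<r - 1. phi x i - y i \<in> cc"
proof -
  define g where "g k = (if k < r then fps_const (y (k - 1) $ 0) + fps_const (y (k - 1) $ s) * fps_X ^ s
    else 0)" for k
  define x where "x = (\<Sum>k\<in>{1..r}. g k * fps_X ^ e k)"
  have "g k \<in> R" for k
    unfolding g_def by (auto intro: R_closed X_power_in_R s_in_H)
  then have xK: "x \<in> K"
    unfolding K_def monomial_module_def x_def e_def by blast
  have g_nth: "g k $ j = (if k < r then (if j = 0 then y (k - 1) $ 0 else 0)
      + (if j = s then y (k - 1) $ s else 0) else 0)" for k j
    using s_pos by (simp add: g_def fps_X_power_mult_right_nth)
  have x_nth: "x $ n = (\<Sum>k\<in>{1..r}. if n < e k then 0 else g k $ (n - e k))" for n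
    by (simp add: x_def fps_sum_nth fps_X_power_mult_right_nth)
  have x_nth_e: "x $ (e m + t) = y (m - 1) $ t" if m: "m \<in> {1..<r}" and t: "t = 0 \<or> t = s" for m t
  proof -
    have "x $ (e m + t) = (if e m + t < e m then 0 else g m $ (e m + t - e m))"
      unfolding x_nth
    proof (rule sum_eq_single)
      fix k
      assume k: "k \<in> {1..r}" "k \<noteq> m"
      have "e k \<noteq> e m" "e k \<noteq> e m + s" "e m \<noteq> e k + s"
        using e_inj e_ne_e_plus_s k m by auto
      then show "(if e m + t < e k then 0 else g k $ (e m + t - e k)) = 0"
        using t s_pos unfolding g_nth by auto
    qed (use m in auto)
    then show ?thesis
      using m t s_pos by (auto simp: g_nth)
  qed
  have "phi x i - y i \<in> cc" if i: "i < r - 1" for i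
  proof -
    have k: "Suc i \<in> {1..<r}"
      using i by auto
    show ?thesis
      unfolding cc_iff
      using phi_in_R assms i x_nth_e[OF k, of 0] x_nth_e[OF k, of s]
      by (auto intro: R_closed simp: phi_nth_0 phi_nth_s)
  qed
  then show ?thesis
    using xK by blast
qed

lemma shift_gaps_imp_quot_iso_free:
  assumes "shift_gaps s"
  shows "quot_iso_free R K R cc (r - 1)"
  unfolding quot_iso_free_def
  using phi_in_R phi_add phi_mult[OF assms] phi_in_cc_iff[OF assms] phi_surj cc_closed(1)
  by (intro exI[of _ phi]) auto

text \<open>In \<open>(R/\<frak>c)\<^bsup>r-1\<^esup>\<close> every element killed by \<open>t\<^sup>s\<close> is a multiple of \<open>t\<^sup>s\<close>;
  transported to \<open>K/R\<close> this says:\<close>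
lemma cc_multiple_of_Xs:
  assumes "p \<in> R" "fps_X ^ s * p \<in> cc"
  shows "p - fps_const (p $ s) * fps_X ^ s \<in> cc"
proof -
  have "p $ 0 = 0"
    using assms(2) unfolding cc_iff by (simp add: fps_X_power_mult_nth)
  moreover have "p - fps_const (p $ s) * fps_X ^ s \<in> R"
    using R_closed(4)[OF assms(1) R_closed(1)[OF R_closed(5) X_power_in_R[OF s_in_H]]] .
  ultimately show ?thesis
    unfolding cc_iff using s_pos by (simp add: fps_X_power_mult_right_nth)
qed

lemma quot_iso_free_annihilated_by_Xs:
  assumes iso: "quot_iso_free R K R cc (r - 1)"
    and x: "x \<in> K" "fps_X ^ s * x \<in> R"
  shows "\<exists>z\<in>K. x - (fps_X ^ s) * z \<in> R"
proof -
  obtain \<phi> where \<phi>R: "\<forall>x\<in>K. \<forall>i<r - 1. \<phi> x i \<in> R"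
    and \<phi>add: "\<forall>x\<in>K. \<forall>y\<in>K. \<forall>i<r - 1. \<phi> (x + y) i - \<phi> x i - \<phi> y i \<in> cc"
    and \<phi>mult: "\<forall>g\<in>R. \<forall>x\<in>K. \<forall>i<r - 1. \<phi> (g * x) i - g * \<phi> x i \<in> cc"
    and \<phi>ker: "\<forall>x\<in>K. (\<forall>i<r - 1. \<phi> x i \<in> cc) \<longleftrightarrow> x \<in> R"
    and \<phi>surj: "\<forall>y. (\<forall>i<r - 1. y i \<in> R) \<longrightarrow> (\<exists>x\<in>K. \<forall>i<r - 1. \<phi> x i - y i \<in> cc)"
    using iso unfolding quot_iso_free_def by blast
  have Xs: "fps_X ^ s \<in> R" "- (fps_X ^ s) \<in> R"
    by (auto intro: R_closed X_power_in_R s_in_H)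
  define lam where "lam i = \<phi> x i $ s" for i
  have approx: "\<phi> x i - fps_const (lam i) * fps_X ^ s \<in> cc" if i: "i < r - 1" for i
  proof -
    have "\<phi> (fps_X ^ s * x) i \<in> cc"
      using \<phi>ker x(2) R_subset_K i by blast
    moreover have "\<phi> (fps_X ^ s * x) i - fps_X ^ s * \<phi> x i \<in> cc"
      using \<phi>mult Xs(1) x(1) i by blast
    ultimately have "\<phi> (fps_X ^ s * x) i - (\<phi> (fps_X ^ s * x) i - fps_X ^ s * \<phi> x i) \<in> cc"
      by (rule cc_closed(3))
    then show ?thesis
      unfolding lam_def using \<phi>R x(1) i by (intro cc_multiple_of_Xs) auto
  qed
  obtain z where z: "z \<in> K" "\<forall>i<r - 1. \<phi> z i - fps_const (lam i) \<in> cc"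
    using \<phi>surj[rule_format, of "\<lambda>i. fps_const (lam i)"] R_closed(5) by blast
  define w where "w = x + (- (fps_X ^ s)) * z"
  have wK: "w \<in> K"
    unfolding w_def using K_closed x(1) z(1) Xs by blast
  have "\<phi> w i \<in> cc" if i: "i < r - 1" for i
  proof -
    have add: "\<phi> w i - \<phi> x i - \<phi> ((- (fps_X ^ s)) * z) i \<in> cc"
      using \<phi>add x(1) K_closed(1)[OF Xs(2) z(1)] i unfolding w_def by blast
    have mult: "\<phi> ((- (fps_X ^ s)) * z) i - (- (fps_X ^ s)) * \<phi> z i \<in> cc"
      using \<phi>mult Xs(2) z(1) i by blast
    have surj: "fps_X ^ s * (\<phi> z i - fps_const (lam i)) \<in> cc"
      using cc_closed(4) Xs(1) z(2) i by blast
    have "(\<phi> w i - \<phi> x i - \<phi> ((- (fps_X ^ s)) * z) i)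
          + (\<phi> ((- (fps_X ^ s)) * z) i - (- (fps_X ^ s)) * \<phi> z i)
          + (\<phi> x i - fps_const (lam i) * fps_X ^ s)
          - fps_X ^ s * (\<phi> z i - fps_const (lam i)) \<in> cc"
      using cc_closed(3)[OF cc_closed(2)[OF cc_closed(2)[OF add mult] approx[OF i]] surj] .
    then show ?thesis
      by (simp add: algebra_simps)
  qed
  then have "w \<in> R"
    using \<phi>ker wK by blast
  then show ?thesis
    using z(1) unfolding w_def by auto
qed

lemma quot_iso_free_imp_shift_gaps:
  assumes "quot_iso_free R K R cc (r - 1)"
  shows "shift_gaps s"
  unfolding shift_gaps_def
proof
  fix k
  assume k: "k \<in> {1..<r}"
  show "e k + s \<notin> H"
  proof
    assume "e k + s \<in> H"
    then have "fps_X ^ s * fps_X ^ e k \<in> R"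
      using X_power_in_R by (simp add: add.commute flip: power_add)
    moreover have "fps_X ^ e k \<in> K"
      unfolding K_eq using e_in_E k by (auto intro: X_power_in_fps_supported)
    ultimately obtain z where z: "z \<in> K" "fps_X ^ e k - (fps_X ^ s) * z \<in> R"
      using quot_iso_free_annihilated_by_Xs[OF assms] by blast
    have "z $ (e k - s) = 0" if "s \<le> e k"
      using z(1) e_minus_not_in_E[of k s] k s_in_H s_pos that unfolding K_eq
      by (auto simp: fps_supported_nth)
    then have "(fps_X ^ e k - (fps_X ^ s) * z) $ e k = 1"
      by (simp add: fps_X_power_mult_nth)
    then show False
      using z(2) e_not_in_H[OF k] unfolding R_eq fps_supported_iff by force
  qed
qed

lemma quot_iso_free_iff_symmetric_sums:
  "quot_iso_free R K R cc (r - 1) \<longleftrightarrow>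
    (\<exists>j\<in>{1..l}. \<forall>i\<in>{1..r-1}. f + int (a j) = c i + c (r - i))"
  using quot_iso_free_imp_shift_gaps shift_gaps_imp_quot_iso_free
    shift_gaps_imp_symmetric_sums symmetric_sums_imp_shift_gaps by blast

end

theorem corollary2p6:
  fixes a :: "nat \<Rightarrow> nat" and l :: nat and H :: "nat set"
    and R K RK cc :: "'a::field fps set"
    and f :: int and c :: "nat \<Rightarrow> int" and r :: nat
  assumes gens_pos: "\<forall>i\<in>{1..l}. a i > 0"
    and gcd1: "Gcd (a ` {1..l}) = 1"
    and H_def: "H = semigroup_gen a l"
    and R_def: "R = semigroup_ring H"
    and f_def: "f = frobenius H"
    and c_mono: "strict_mono_on {1..r} c"
    and c_PF: "c ` {1..r} = pseudo_frobenius H a l"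
    and K_def: "K = monomial_module R (\<lambda>i. nat (f - c i)) r"
    and RK_def: "RK = ring_adjoin R K"
    and cc_def: "cc = colon R RK"
    and twoAGL: "module_length_eq R K RK 2"
  shows "quot_iso_free R K R cc (r - 1) \<longleftrightarrow>
         (\<exists>j\<in>{1..l}. \<forall>i\<in>{1..r-1}. f + int (a j) = c i + c (r - i))"
proof -
  interpret two_agl_semigroup_ring a l H f c r R K RK cc
    by unfold_locales (fact assms)+
  show ?thesis
    by (rule quot_iso_free_iff_symmetric_sums)
qed

end
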